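(* Let $n\geqslant 2$ and let $X_1,\dots,X_n$ be independent real random variables with $\mathbb{E}X_j=0$, $\mathbb{E}X_j^2=1$ and finite moments of all orders. Let $\sigma_1,\dots,\sigma_n\geqslant 0$ satisfy $\sigma_1^2+\cdots+\sigma_n^2=1$ and $\sigma_j^2<1$ for all $j$. Put $S_n=\sigma_1X_1+\cdots+\sigma_nX_n$ and, for each $k$, $S_{n;k}=\dfrac{S_n-\sigma_kX_k}{\sqrt{1-\sigma_k^2}}$. Then for all $m\geqslant 1$, \[ \mathbb{E}H_m(S_n)=\sum_{k=1}^n\frac1m\sum_{j=1}^m\binom{m}{j}\,\mathbb{E}H_{m-j}(S_{n;k})\; j\,\mathbb{E}H_j(X_k)\,(1-\sigma_k^2)^{(m-j)/2}\sigma_k^{\,j}. \]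
   Context: The Hermite polynomials $H_n$ ($n\geqslant 0$) are defined by the generating function $\sum_{n=0}^\infty \frac{H_n(x)}{n!}z^n=e^{xz-z^2/2}$; e.g. $H_0=1$, $H_1(x)=x$, $H_2(x)=x^2-1$, $H_3(x)=x^3-3x$. *)

theory Defs
  imports "HOL-Probability.Probability" "HOL-Computational_Algebra.Formal_Power_Series"
begin

text \<open>Probabilists' Hermite polynomials, defined by the generating function
  sum_n H_n(x)/n! z^n = exp(x z - z^2/2) = exp(x z) * exp(-z^2/2), read as an identity of
  formal power series in z: H_n(x) = n! * [z^n] (exp(x z) * (exp(-z/2) composed with z^2)).\<close>
definition hermite :: "nat \<Rightarrow> real \<Rightarrow> real" where
  "hermite n x = fact n * fps_nth (fps_exp x * (fps_exp (-1/2) oo fps_X ^ 2)) n"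

end

theory Submission
  imports Defs
begin

(* Let G_x(z) = exp(x z - z^2/2) be the exponential generating function of the H_n(x).
   If a^2 + b^2 = 1 then G_u(a z) G_v(b z) = G_(a u + b v)(z), and z (d/dz) G_v(b z) =
   (b v z - b^2 z^2) G_v(b z). Comparing coefficients of z^m in G_u(a z) z (d/dz) G_v(b z) gives
     sum_j C(m,j) H_(m-j)(u) j H_j(v) a^(m-j) b^j = m (b v H_(m-1)(s) - b^2 (m-1) H_(m-2)(s)),
   s = a u + b v. For a = sqrt(1 - sigma_k^2), b = sigma_k, u = S_(n;k), v = X_k the expectations
   on the left factorise by independence, and summing the right-hand sides over k, with
   sum_k sigma_k^2 = 1 and the recurrence H_m(s) = s H_(m-1)(s) - (m-1) H_(m-2)(s),
   gives m E H_m(S_n). *)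

definition gauss_fps :: "real \<Rightarrow> real fps" where
  "gauss_fps c = fps_exp c oo fps_X ^ 2"

definition hermite_egf :: "real \<Rightarrow> real fps" where
  "hermite_egf x = fps_exp x * gauss_fps (-1/2)"

lemma hermite_eq_fps_nth: "hermite n x = fact n * fps_nth (hermite_egf x) n"
  by (simp add: hermite_def hermite_egf_def gauss_fps_def)

lemma gauss_fps_mult: "gauss_fps c * gauss_fps d = gauss_fps (c + d)"
  unfolding gauss_fps_def by (simp add: fps_compose_mult_distrib[symmetric] fps_exp_add_mult)

lemma gauss_fps_compose_linear:
  "gauss_fps c oo (fps_const a * fps_X) = gauss_fps (a\<^sup>2 * c)"
proof -
  have sq: "fps_X ^ 2 oo (fps_const a * fps_X) = (fps_const (a\<^sup>2) * fps_X) oo fps_X ^ 2"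
    by (simp add: fps_compose_power[symmetric] fps_compose_mult_distrib power_mult_distrib)
  have "gauss_fps c oo (fps_const a * fps_X) = fps_exp c oo (fps_X ^ 2 oo (fps_const a * fps_X))"
    unfolding gauss_fps_def by (rule fps_compose_assoc[symmetric]) simp_all
  also have "\<dots> = (fps_exp c oo (fps_const (a\<^sup>2) * fps_X)) oo fps_X ^ 2"
    unfolding sq by (rule fps_compose_assoc) simp_all
  finally show ?thesis by (simp add: gauss_fps_def)
qed

lemma fps_deriv_gauss_fps: "fps_deriv (gauss_fps c) = fps_const (2 * c) * fps_X * gauss_fps c"
  by (simp add: gauss_fps_def fps_compose_deriv fps_compose_mult_distrib power2_eq_square
      algebra_simps)

lemma hermite_egf_compose_linear:
  "hermite_egf u oo (fps_const a * fps_X) = fps_exp (a * u) * gauss_fps (- (a\<^sup>2 / 2))"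
  by (simp add: hermite_egf_def fps_compose_mult_distrib gauss_fps_compose_linear)

lemma hermite_egf_addition:
  assumes "a\<^sup>2 + b\<^sup>2 = 1"
  shows "(hermite_egf u oo (fps_const a * fps_X)) * (hermite_egf v oo (fps_const b * fps_X))
    = hermite_egf (a * u + b * v)"
proof -
  have "- (a\<^sup>2 / 2) + - (b\<^sup>2 / 2) = -1/2" using assms by simp
  then have "gauss_fps (- (a\<^sup>2 / 2)) * gauss_fps (- (b\<^sup>2 / 2)) = gauss_fps (-1/2)"
    by (simp only: gauss_fps_mult)
  then show ?thesis
    unfolding hermite_egf_compose_linear unfolding hermite_egf_def fps_exp_add_mult
    by (simp only: mult_ac)
qed

lemma fps_deriv_hermite_egf_compose_linear:
  "fps_deriv (hermite_egf v oo (fps_const b * fps_X))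
    = (fps_const (b * v) - fps_const (b\<^sup>2) * fps_X) * (hermite_egf v oo (fps_const b * fps_X))"
  unfolding hermite_egf_compose_linear fps_deriv_mult fps_exp_deriv fps_deriv_gauss_fps
  by (simp add: algebra_simps fps_const_neg[symmetric] del: fps_const_neg)

lemma fps_deriv_hermite_egf: "fps_deriv (hermite_egf s) = (fps_const s - fps_X) * hermite_egf s"
  using fps_deriv_hermite_egf_compose_linear[of s 1] by simp

lemma hermite_egf_addition_deriv:
  assumes "a\<^sup>2 + b\<^sup>2 = 1"
  shows "fps_X * fps_deriv (hermite_egf v oo (fps_const b * fps_X))
      * (hermite_egf u oo (fps_const a * fps_X))
    = fps_const (b * v) * (fps_X * hermite_egf (a * u + b * v))
      - fps_const (b\<^sup>2) * (fps_X ^ 2 * hermite_egf (a * u + b * v))"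
  unfolding fps_deriv_hermite_egf_compose_linear hermite_egf_addition[OF assms, symmetric]
  by (simp add: algebra_simps power2_eq_square)

lemma fps_nth_X_mult_deriv:
  "fps_nth (fps_X * fps_deriv f) n = of_nat n * fps_nth (f :: 'a :: comm_ring_1 fps) n"
  by (cases n) (simp_all add: algebra_simps)

lemma fact_mult_nth_X_hermite_egf:
  "fact m * fps_nth (fps_X * hermite_egf s) m = real m * hermite (m - 1) s"
  by (cases m) (simp_all add: hermite_eq_fps_nth)

lemma fact_mult_nth_X2_hermite_egf:
  "fact m * fps_nth (fps_X ^ 2 * hermite_egf s) m = real m * (real (m - 1) * hermite (m - 2) s)"
proof (cases "m < 2")
  case False
  then obtain k where m: "m = k + 2" by (metis add.commute le_Suc_ex not_less)
  then have "fps_nth (fps_X ^ 2 * hermite_egf s) m = fps_nth (hermite_egf s) k"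
    by (simp add: fps_X_power_mult_nth)
  then show ?thesis by (simp add: m hermite_eq_fps_nth algebra_simps)
qed (auto simp: fps_X_power_mult_nth less_2_cases_iff)

lemma hermite_rec:
  assumes "m \<ge> 1"
  shows "hermite m s = s * hermite (m - 1) s - real (m - 1) * hermite (m - 2) s"
proof -
  have egf_eq: "fps_X * fps_deriv (hermite_egf s)
      = fps_const s * (fps_X * hermite_egf s) - fps_X ^ 2 * hermite_egf s"
    by (simp add: fps_deriv_hermite_egf algebra_simps power2_eq_square)
  have "real m * hermite m s = fact m * fps_nth (fps_X * fps_deriv (hermite_egf s)) m"
    unfolding fps_nth_X_mult_deriv hermite_eq_fps_nth by (simp only: mult_ac)
  also have "\<dots> = s * (fact m * fps_nth (fps_X * hermite_egf s) m)
      - fact m * fps_nth (fps_X ^ 2 * hermite_egf s) m"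
    unfolding egf_eq fps_sub_nth fps_mult_left_const_nth by (simp only: right_diff_distrib mult_ac)
  also have "\<dots> = real m * (s * hermite (m - 1) s - real (m - 1) * hermite (m - 2) s)"
    unfolding fact_mult_nth_X_hermite_egf fact_mult_nth_X2_hermite_egf
    by (simp only: right_diff_distrib mult_ac)
  finally show ?thesis using assms by simp
qed

lemma hermite_addition_weighted:
  assumes "a\<^sup>2 + b\<^sup>2 = 1"
  shows "(\<Sum>j=1..m. real (m choose j) * hermite (m - j) u * real j * hermite j v
        * a ^ (m - j) * b ^ j)
    = real m * (b * v * hermite (m - 1) (a * u + b * v)
        - b\<^sup>2 * real (m - 1) * hermite (m - 2) (a * u + b * v))"
proof -
  define A where "A = hermite_egf u oo (fps_const a * fps_X)"
  define B where "B = hermite_egf v oo (fps_const b * fps_X)"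
  define s where "s = a * u + b * v"
  have "(\<Sum>j=1..m. real (m choose j) * hermite (m - j) u * real j * hermite j v
        * a ^ (m - j) * b ^ j)
      = (\<Sum>j=0..m. real (m choose j) * hermite (m - j) u * real j * hermite j v
        * a ^ (m - j) * b ^ j)"
    by (simp add: sum.atLeast_Suc_atMost)
  also have "\<dots> = (\<Sum>j=0..m. fact m * (fps_nth (fps_X * fps_deriv B) j * fps_nth A (m - j)))"
  proof (intro sum.cong refl)
    fix j assume "j \<in> {0..m}"
    then have fact_m: "fact m = real (m choose j) * fact j * fact (m - j)"
      by (simp add: binomial_fact)
    then show "real (m choose j) * hermite (m - j) u * real j * hermite j v
        * a ^ (m - j) * b ^ j = fact m * (fps_nth (fps_X * fps_deriv B) j * fps_nth A (m - j))"
      unfolding fps_nth_X_mult_deriv A_def B_def hermite_eq_fps_nth fps_nth_compose_linear fact_m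
      by (simp only: mult_ac)
  qed
  also have "\<dots> = fact m * fps_nth (fps_X * fps_deriv B * A) m"
    by (simp add: fps_mult_nth sum_distrib_left)
  also have "fps_X * fps_deriv B * A
      = fps_const (b * v) * (fps_X * hermite_egf s) - fps_const (b\<^sup>2) * (fps_X ^ 2 * hermite_egf s)"
    unfolding A_def B_def s_def by (rule hermite_egf_addition_deriv[OF assms])
  also have "fact m * fps_nth \<dots> m
      = b * v * (fact m * fps_nth (fps_X * hermite_egf s) m)
        - b\<^sup>2 * (fact m * fps_nth (fps_X ^ 2 * hermite_egf s) m)"
    unfolding fps_sub_nth fps_mult_left_const_nth by (simp only: right_diff_distrib mult_ac)
  also have "\<dots> = real m * (b * v * hermite (m - 1) s - b\<^sup>2 * real (m - 1) * hermite (m - 2) s)"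
    unfolding fact_mult_nth_X_hermite_egf fact_mult_nth_X2_hermite_egf
    by (simp only: right_diff_distrib mult_ac)
  finally show ?thesis unfolding s_def .
qed

lemma hermite_is_poly: "\<exists>p. hermite n = poly p"
proof
  let ?g = "gauss_fps (-1/2)"
  show "hermite n = poly (\<Sum>i\<le>n. monom (fact n * fps_nth ?g (n - i) / fact i) i)"
  proof
    fix x
    have "hermite n x = (\<Sum>i\<le>n. fact n * (x ^ i / fact i * fps_nth ?g (n - i)))"
      by (simp add: hermite_eq_fps_nth hermite_egf_def fps_mult_nth sum_distrib_left atLeast0AtMost)
    then show "hermite n x = poly (\<Sum>i\<le>n. monom (fact n * fps_nth ?g (n - i) / fact i) i) x"
      by (simp add: poly_sum poly_monom mult_ac)
  qed
qed

lemma borel_measurable_hermite: "hermite n \<in> borel_measurable borel"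
proof -
  obtain p where "hermite n = poly p" using hermite_is_poly by blast
  then show ?thesis by (auto intro!: borel_measurable_continuous_onI continuous_intros)
qed

definition finite_moments :: "'a measure \<Rightarrow> ('a \<Rightarrow> real) \<Rightarrow> bool" where
  "finite_moments M Y \<longleftrightarrow> (\<forall>p. integrable M (\<lambda>\<omega>. Y \<omega> ^ p))"

lemma finite_moments_integrable: "finite_moments M Y \<Longrightarrow> integrable M Y"
  unfolding finite_moments_def by (erule allE[of _ 1]) simp

lemma integrable_mult_powers:
  assumes "finite_moments M Y" "finite_moments M Z"
  shows "integrable M (\<lambda>\<omega>. Y \<omega> ^ i * Z \<omega> ^ j)"
proof (rule Bochner_Integration.integrable_bound)
  show "integrable M (\<lambda>\<omega>. (Y \<omega> ^ i)\<^sup>2 + (Z \<omega> ^ j)\<^sup>2)"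
    using assms unfolding finite_moments_def power_mult[symmetric] by auto
  show "(\<lambda>\<omega>. Y \<omega> ^ i * Z \<omega> ^ j) \<in> borel_measurable M"
    using assms[THEN finite_moments_integrable] by measurable
  have "\<bar>y * z\<bar> \<le> y\<^sup>2 + z\<^sup>2" for y z :: real
  proof -
    have "2 * \<bar>y\<bar> * \<bar>z\<bar> \<le> y\<^sup>2 + z\<^sup>2"
      using sum_squares_bound[of "\<bar>y\<bar>" "\<bar>z\<bar>"] by simp
    moreover have "0 \<le> \<bar>y\<bar> * \<bar>z\<bar>" by simp
    ultimately show ?thesis unfolding abs_mult by linarith
  qed
  then show "AE \<omega> in M. norm (Y \<omega> ^ i * Z \<omega> ^ j) \<le> norm ((Y \<omega> ^ i)\<^sup>2 + (Z \<omega> ^ j)\<^sup>2)"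
    by simp
qed

lemma finite_moments_add:
  assumes "finite_moments M Y" "finite_moments M Z"
  shows "finite_moments M (\<lambda>\<omega>. Y \<omega> + Z \<omega>)"
  unfolding finite_moments_def
proof
  fix p
  have "integrable M (\<lambda>\<omega>. \<Sum>k\<le>p. of_nat (p choose k) * (Y \<omega> ^ k * Z \<omega> ^ (p - k)))"
    using integrable_mult_powers[OF assms] by auto
  then show "integrable M (\<lambda>\<omega>. (Y \<omega> + Z \<omega>) ^ p)"
    by (simp add: binomial_ring mult.assoc)
qed

lemma finite_moments_mult:
  assumes "finite_moments M Y" "finite_moments M Z"
  shows "finite_moments M (\<lambda>\<omega>. Y \<omega> * Z \<omega>)"
  unfolding finite_moments_def power_mult_distrib using integrable_mult_powers[OF assms] by blast

context finite_measure
begin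

lemma finite_moments_const: "finite_moments M (\<lambda>_. c)"
  by (simp add: finite_moments_def)

lemma finite_moments_sum:
  "(\<And>i. i \<in> I \<Longrightarrow> finite_moments M (Y i))
    \<Longrightarrow> finite_moments M (\<lambda>\<omega>. \<Sum>i\<in>I. Y i \<omega>)"
  by (induction I rule: infinite_finite_induct)
    (simp_all add: finite_moments_const finite_moments_add)

lemma finite_moments_poly:
  assumes "finite_moments M Y"
  shows "finite_moments M (\<lambda>\<omega>. poly p (Y \<omega>))"
  unfolding poly_altdef using assms
  by (intro finite_moments_sum finite_moments_mult finite_moments_const)
    (simp add: finite_moments_def flip: power_mult)

lemma finite_moments_hermite:
  "finite_moments M Y \<Longrightarrow> finite_moments M (\<lambda>\<omega>. hermite n (Y \<omega>))"
  using hermite_is_poly finite_moments_poly by metis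

end

context prob_space
begin

lemma indep_var_weighted_sum_remove:
  fixes X :: "'i \<Rightarrow> 'a \<Rightarrow> real"
  assumes "indep_vars (\<lambda>_. borel) X I" "k \<in> I"
  shows "indep_var borel (X k) borel (\<lambda>\<omega>. \<Sum>i\<in>I - {k}. c i * X i \<omega>)"
proof -
  have "(\<lambda>f. \<Sum>i\<in>I - {k}. c i * f i) \<in> borel_measurable (PiM (I - {k}) (\<lambda>_. borel))"
    by measurable
  then have "indep_var borel ((\<lambda>f. f k) \<circ> (\<lambda>\<omega>. restrict (\<lambda>i. X i \<omega>) {k}))
      borel ((\<lambda>f. \<Sum>i\<in>I - {k}. c i * f i) \<circ> (\<lambda>\<omega>. restrict (\<lambda>i. X i \<omega>) (I - {k})))"
    using assms by (intro indep_var_compose[OF indep_var_restrict[OF assms(1)]]) auto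
  then show ?thesis by (simp add: comp_def)
qed

lemma expectation_hermite_addition_weighted:
  assumes "indep_var borel Z borel Y" "finite_moments M Y" "finite_moments M Z" "a\<^sup>2 + b\<^sup>2 = 1"
  shows "(\<Sum>j=1..m. real (m choose j) * expectation (\<lambda>\<omega>. hermite (m - j) (Y \<omega>))
        * real j * expectation (\<lambda>\<omega>. hermite j (Z \<omega>)) * a ^ (m - j) * b ^ j)
    = real m * expectation (\<lambda>\<omega>. b * Z \<omega> * hermite (m - 1) (a * Y \<omega> + b * Z \<omega>)
        - b\<^sup>2 * real (m - 1) * hermite (m - 2) (a * Y \<omega> + b * Z \<omega>))"
proof -
  have term_eq: "real (m choose j) * expectation (\<lambda>\<omega>. hermite (m - j) (Y \<omega>))
        * real j * expectation (\<lambda>\<omega>. hermite j (Z \<omega>)) * a ^ (m - j) * b ^ j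
      = expectation (\<lambda>\<omega>. real (m choose j) * hermite (m - j) (Y \<omega>)
        * real j * hermite j (Z \<omega>) * a ^ (m - j) * b ^ j)" for j
  proof -
    have "expectation (\<lambda>\<omega>. hermite j (Z \<omega>) * hermite (m - j) (Y \<omega>))
        = expectation (\<lambda>\<omega>. hermite j (Z \<omega>)) * expectation (\<lambda>\<omega>. hermite (m - j) (Y \<omega>))"
      using assms(1-3)
      by (intro indep_var_lebesgue_integral indep_var_compose[unfolded comp_def, OF assms(1)]
          borel_measurable_hermite finite_moments_integrable finite_moments_hermite) auto
    moreover have "(\<lambda>\<omega>. real (m choose j) * hermite (m - j) (Y \<omega>)
          * real j * hermite j (Z \<omega>) * a ^ (m - j) * b ^ j)
        = (\<lambda>\<omega>. (real (m choose j) * real j * a ^ (m - j) * b ^ j)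
          * (hermite j (Z \<omega>) * hermite (m - j) (Y \<omega>)))"
      by (simp add: fun_eq_iff mult_ac)
    ultimately show ?thesis by (simp only: integral_mult_right_zero) (simp add: mult_ac)
  qed
  have "(\<Sum>j=1..m. real (m choose j) * expectation (\<lambda>\<omega>. hermite (m - j) (Y \<omega>))
        * real j * expectation (\<lambda>\<omega>. hermite j (Z \<omega>)) * a ^ (m - j) * b ^ j)
      = (\<Sum>j=1..m. expectation (\<lambda>\<omega>. real (m choose j) * hermite (m - j) (Y \<omega>)
        * real j * hermite j (Z \<omega>) * a ^ (m - j) * b ^ j))"
    by (rule sum.cong[OF refl term_eq])
  also have "\<dots> = expectation (\<lambda>\<omega>. \<Sum>j=1..m. real (m choose j) * hermite (m - j) (Y \<omega>)
        * real j * hermite j (Z \<omega>) * a ^ (m - j) * b ^ j)"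
    using assms(2,3)
    by (intro Bochner_Integration.integral_sum[symmetric] finite_moments_integrable
        finite_moments_mult finite_moments_const finite_moments_hermite)
  finally show ?thesis
    by (simp only: hermite_addition_weighted[OF assms(4)] integral_mult_right_zero)
qed

lemma expectation_hermite_leave_one_out:
  fixes X :: "'i \<Rightarrow> 'a \<Rightarrow> real"
  assumes indep: "indep_vars (\<lambda>_. borel) X I" and "finite I" "k \<in> I"
    and moments: "\<And>i. i \<in> I \<Longrightarrow> finite_moments M (X i)" and "(\<sigma> k)\<^sup>2 < 1"
  defines "S \<equiv> \<lambda>\<omega>. \<Sum>i\<in>I. \<sigma> i * X i \<omega>"
  shows "(\<Sum>j=1..m. real (m choose j)
        * expectation (\<lambda>\<omega>. hermite (m - j) ((S \<omega> - \<sigma> k * X k \<omega>) / sqrt (1 - (\<sigma> k)\<^sup>2)))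
        * real j * expectation (\<lambda>\<omega>. hermite j (X k \<omega>))
        * (1 - (\<sigma> k)\<^sup>2) powr (real (m - j) / 2) * (\<sigma> k) ^ j)
    = real m * expectation (\<lambda>\<omega>. \<sigma> k * X k \<omega> * hermite (m - 1) (S \<omega>)
        - (\<sigma> k)\<^sup>2 * real (m - 1) * hermite (m - 2) (S \<omega>))"
proof -
  define a where "a = sqrt (1 - (\<sigma> k)\<^sup>2)"
  define U where "U = (\<lambda>\<omega>. \<Sum>i\<in>I - {k}. \<sigma> i / a * X i \<omega>)"
  have "0 < a" using \<open>(\<sigma> k)\<^sup>2 < 1\<close> by (simp add: a_def)
  have S_split: "a * U \<omega> + \<sigma> k * X k \<omega> = S \<omega>" for \<omega>
    using \<open>finite I\<close> \<open>k \<in> I\<close> \<open>0 < a\<close>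
    by (simp add: S_def U_def sum.remove sum_distrib_left)
  have U_eq: "(S \<omega> - \<sigma> k * X k \<omega>) / sqrt (1 - (\<sigma> k)\<^sup>2) = U \<omega>" for \<omega>
    using \<open>0 < a\<close> by (simp flip: S_split a_def)
  have powr_eq: "(1 - (\<sigma> k)\<^sup>2) powr (real (m - j) / 2) = a ^ (m - j)" for j
    using \<open>0 < a\<close> by (simp add: a_def powr_half_sqrt[symmetric] powr_realpow[symmetric] powr_powr)
  have "indep_var borel (X k) borel U"
    unfolding U_def using indep \<open>k \<in> I\<close> by (rule indep_var_weighted_sum_remove)
  moreover have "finite_moments M U"
    unfolding U_def using moments
    by (intro finite_moments_sum finite_moments_mult finite_moments_const) auto
  moreover have "a\<^sup>2 + (\<sigma> k)\<^sup>2 = 1" using \<open>(\<sigma> k)\<^sup>2 < 1\<close> by (simp add: a_def)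
  ultimately show ?thesis
    unfolding U_eq powr_eq unfolding S_split[symmetric]
    using moments \<open>k \<in> I\<close> by (intro expectation_hermite_addition_weighted) auto
qed

end

theorem theorem4:
  fixes M :: "'a measure" and X :: "nat \<Rightarrow> 'a \<Rightarrow> real" and \<sigma> :: "nat \<Rightarrow> real"
    and n m :: nat
  assumes "prob_space M"
    and "n \<ge> 2"
    and "\<And>j. j \<in> {1..n} \<Longrightarrow> X j \<in> borel_measurable M"
    and "prob_space.indep_vars M (\<lambda>_. borel) X {1..n}"
    and "\<And>j. j \<in> {1..n} \<Longrightarrow> integral\<^sup>L M (X j) = 0"
    and "\<And>j. j \<in> {1..n} \<Longrightarrow> integral\<^sup>L M (\<lambda>\<omega>. (X j \<omega>) ^ 2) = 1"
    and "\<And>j p. j \<in> {1..n} \<Longrightarrow> integrable M (\<lambda>\<omega>. (X j \<omega>) ^ p)"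
    and "\<And>j. j \<in> {1..n} \<Longrightarrow> \<sigma> j \<ge> 0"
    and "(\<Sum>j=1..n. (\<sigma> j)^2) = 1"
    and "\<And>j. j \<in> {1..n} \<Longrightarrow> (\<sigma> j)^2 < 1"
    and "m \<ge> 1"
  shows "integral\<^sup>L M (\<lambda>\<omega>. hermite m (\<Sum>i=1..n. \<sigma> i * X i \<omega>)) =
    (\<Sum>k=1..n. (1 / real m) * (\<Sum>j=1..m. real (m choose j)
        * integral\<^sup>L M (\<lambda>\<omega>. hermite (m - j)
            (((\<Sum>i=1..n. \<sigma> i * X i \<omega>) - \<sigma> k * X k \<omega>) / sqrt (1 - (\<sigma> k)^2)))
        * real j * integral\<^sup>L M (\<lambda>\<omega>. hermite j (X k \<omega>))
        * (1 - (\<sigma> k)^2) powr (real (m - j) / 2) * (\<sigma> k) ^ j))"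
proof -
  interpret prob_space M by fact
  let ?S = "\<lambda>\<omega>. \<Sum>i=1..n. \<sigma> i * X i \<omega>"
  let ?T = "\<lambda>k \<omega>. \<sigma> k * X k \<omega> * hermite (m - 1) (?S \<omega>)
    - (\<sigma> k)\<^sup>2 * real (m - 1) * hermite (m - 2) (?S \<omega>)"
  have moments: "finite_moments M (X i)" if "i \<in> {1..n}" for i
    using assms(7) that by (simp add: finite_moments_def)
  have "(\<Sum>k=1..n. ?T k \<omega>) = ?S \<omega> * hermite (m - 1) (?S \<omega>)
      - (\<Sum>k=1..n. (\<sigma> k)\<^sup>2) * real (m - 1) * hermite (m - 2) (?S \<omega>)"
    for \<omega> by (simp add: sum_subtractf sum_distrib_right)
  then have "expectation (\<lambda>\<omega>. hermite m (?S \<omega>)) = expectation (\<lambda>\<omega>. \<Sum>k=1..n. ?T k \<omega>)"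
    using assms(9) by (simp add: hermite_rec[OF assms(11)])
  also have "\<dots> = (\<Sum>k=1..n. expectation (?T k))"
    using moments
    by (intro Bochner_Integration.integral_sum Bochner_Integration.integrable_diff
        finite_moments_integrable finite_moments_mult finite_moments_const finite_moments_hermite
        finite_moments_sum) auto
  also have "\<dots> = (\<Sum>k=1..n. (1 / real m) * (real m * expectation (?T k)))"
    using assms(11) by simp
  finally show ?thesis
    by (rule trans) (use assms(4,10) moments in \<open>intro sum.cong refl
        arg_cong[where f = "(*) (1 / real m)"] expectation_hermite_leave_one_out[symmetric]; auto\<close>)
qed

end
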